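(* Let $(\mathcal{A},\varphi)$ be a tracial noncommutative probability space with universal enveloping traffic space $(\mathcal{B},\psi)=(\mathcal{G}(\mathcal{A}),\psi)$. Let $t\in\mathcal{G}(\mathcal{A})$ be (the class of) a graph monomial with vertices $v\neq w$ forming a 3-connection (i.e. $\lambda_t(v,w)\ge3$ in the underlying undirected multigraph). Then $t_{v\sim w}\equiv t\pmod\psi$, where $t_{v\sim w}$ is the graph monomial obtained from $t$ by identifying $v$ and $w$.
   Context: $(\mathcal{A},\varphi)$: unital complex algebra with unital tracial linear functional; free cumulants $\kappa_n$ determined by $\varphi(a_1\cdots a_n)=\sum_{\pi\in NC(n)}\prod_{B\in\pi}\kappa_{|B|}[(a_i)_{i\in B}]$. A graph monomial in $\mathcal{A}$ is a finite connected directed multigraph $(V,E,\mathrm{src},\mathrm{tgt})$ (loops, parallel edges allowed) with distinguished, not necessarily distinct, vertices $v_{\mathrm{in}},v_{\mathrm{out}}$ and edge labels in $\mathcal{A}$, up to isomorphism. $\iota(a)$: two vertices, one edge from $v_{\mathrm{in}}$ to $v_{\mathrm{out}}$ labelled $a$. Substitution $Z_g(t_1,\dots,t_K)$ for a connected bi-rooted multidigraph $g$ with ordered edges $e_1,\dots,e_K$ replaces each $e_i$ by a copy of $t_i$, identifying $\mathrm{src}(e_i)$ with the input and $\mathrm{tgt}(e_i)$ with the output of $t_i$; the product $t_1t_2$ identifies the input of $t_1$ with the output of $t_2$ (output of $t_1$ and input of $t_2$ become output and input). $\mathcal{G}(\mathcal{A})$ is the span of graph monomials modulo the span of $Z_g(\iota(a_1),\dots,\iota(a_K))-Z_g(P(\iota(b_1),\dots,\iota(b_n)),\iota(a_2),\dots)$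 (any edge position) for $a_1=P(b_1,\dots,b_n)$, $P$ a noncommutative polynomial. A test graph is a finite connected directed multigraph with labels in $\mathcal{A}$; $T^\pi$ identifies vertices in blocks of a partition $\pi$. Cactus: connected multigraph with each edge in exactly one simple cycle (loops, pairs of parallel edges count); pads = these cycles; oriented cactus: every pad directed. $\tau^0_\varphi[T]=\prod_{C\in\mathrm{Pads}(T)}\kappa_{n_C}[\gamma(e_1),\dots,\gamma(e_{n_C})]$ for oriented cacti (edges listed with $\mathrm{src}(e_i)=\mathrm{tgt}(e_{i+1})$, indices mod $n_C$), else $0$; $\tau_\varphi[T]=\sum_\pi\tau^0_\varphi[T^\pi]$ over partitions of the vertex set. $\psi(t)=\tau_\varphi[\tilde\Delta(t)]$ where $\tilde\Delta(t)$ identifies input and output and forgets roots (well defined on $\mathcal{G}(\mathcal{A})$). $s\equiv t\pmod\psi$ means $\psi((s-t)u)=0$ for all $u\in\mathcal{G}(\mathcal{A})$. $\lambda_t(v,w)$: minimal number of edges whose deletion disconnects $v$ and $w$. *)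

theory Defs
  imports Complex_Main "HOL-Library.Disjoint_Sets"
begin

definition complex_algebra :: "(complex \<Rightarrow> 'a::ring_1 \<Rightarrow> 'a) \<Rightarrow> bool" where
  "complex_algebra sc \<longleftrightarrow> vector_space sc \<and>
     (\<forall>c x y. sc c (x * y) = sc c x * y \<and> sc c (x * y) = x * sc c y)"

definition tracial_state :: "(complex \<Rightarrow> 'a::ring_1 \<Rightarrow> 'a) \<Rightarrow> ('a \<Rightarrow> complex) \<Rightarrow> bool" where
  "tracial_state sc \<phi> \<longleftrightarrow> Vector_Spaces.linear sc ((*) :: complex \<Rightarrow> complex \<Rightarrow> complex) \<phi>
     \<and> \<phi> 1 = 1 \<and> (\<forall>x y. \<phi> (x * y) = \<phi> (y * x))"

definition noncrossing :: "nat set set \<Rightarrow> bool" where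
  "noncrossing P \<longleftrightarrow> (\<forall>B\<in>P. \<forall>B'\<in>P. \<forall>a b c d. a < b \<and> b < c \<and> c < d \<and>
      a \<in> B \<and> c \<in> B \<and> b \<in> B' \<and> d \<in> B' \<longrightarrow> B = B')"

definition NC :: "nat \<Rightarrow> nat set set set" where
  "NC n = {P. partition_on {0..<n} P \<and> noncrossing P}"

text \<open>Free cumulants: the unique family (on nonempty argument lists) satisfying the
moment-cumulant formula; kappa applied to a list [a_1,...,a_n] is kappa_n[a_1,...,a_n].
Blocks are read in increasing order of indices (nths).\<close>

definition free_cumulant :: "('a::ring_1 \<Rightarrow> complex) \<Rightarrow> 'a list \<Rightarrow> complex" where
  "free_cumulant \<phi> = (THE \<kappa>. \<kappa> [] = 0 \<and>
     (\<forall>xs. xs \<noteq> [] \<longrightarrow> \<phi> (prod_list xs) = (\<Sum>P\<in>NC (length xs). \<Prod>B\<in>P. \<kappa> (nths xs B))))"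

record ('v, 'a) tgraph =
  verts :: "'v set"
  edges :: "nat set"
  src :: "nat \<Rightarrow> 'v"
  tgt :: "nat \<Rightarrow> 'v"
  lab :: "nat \<Rightarrow> 'a"

definition adj_rel :: "('v, 'a) tgraph \<Rightarrow> nat set \<Rightarrow> ('v \<times> 'v) set" where
  "adj_rel G F = {(src G e, tgt G e) | e. e \<in> F} \<union> {(tgt G e, src G e) | e. e \<in> F}"

definition joined :: "('v, 'a) tgraph \<Rightarrow> nat set \<Rightarrow> 'v \<Rightarrow> 'v \<Rightarrow> bool" where
  "joined G F u w \<longleftrightarrow> (u, w) \<in> (adj_rel G F)\<^sup>*"

definition wf_graph :: "('v, 'a) tgraph \<Rightarrow> bool" where
  "wf_graph G \<longleftrightarrow> finite (verts G) \<and> finite (edges G) \<and> verts G \<noteq> {} \<and>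
     (\<forall>e\<in>edges G. src G e \<in> verts G \<and> tgt G e \<in> verts G)"

definition connected_graph :: "('v, 'a) tgraph \<Rightarrow> bool" where
  "connected_graph G \<longleftrightarrow> (\<forall>u\<in>verts G. \<forall>w\<in>verts G. joined G (edges G) u w)"

text \<open>Graph monomials (representatives; vertices are naturals).\<close>
record 'a gmono =
  gr :: "(nat, 'a) tgraph"
  vin :: nat
  vout :: nat

definition wf_gmono :: "'a gmono \<Rightarrow> bool" where
  "wf_gmono t \<longleftrightarrow> wf_graph (gr t) \<and> connected_graph (gr t) \<and>
     vin t \<in> verts (gr t) \<and> vout t \<in> verts (gr t)"

definition merge_vertex :: "'v \<Rightarrow> 'v \<Rightarrow> 'v \<Rightarrow> 'v" where
  "merge_vertex v w u = (if u = w then v else u)"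

definition identify_graph :: "('v, 'a) tgraph \<Rightarrow> 'v \<Rightarrow> 'v \<Rightarrow> ('v, 'a) tgraph" where
  "identify_graph G v w = \<lparr> verts = merge_vertex v w ` verts G, edges = edges G,
      src = merge_vertex v w \<circ> src G, tgt = merge_vertex v w \<circ> tgt G, lab = lab G \<rparr>"

definition identify :: "'a gmono \<Rightarrow> nat \<Rightarrow> nat \<Rightarrow> 'a gmono" where
  "identify t v w = \<lparr> gr = identify_graph (gr t) v w,
      vin = merge_vertex v w (vin t), vout = merge_vertex v w (vout t) \<rparr>"

text \<open>Product t1 t2: disjoint union, identifying the input of t1 with the output of
t2; output of t1 becomes the output, input of t2 becomes the input.
Vertices/edges of t1 are encoded as 2x, those of t2 as 2x+1.\<close>
definition gm_mult :: "'a gmono \<Rightarrow> 'a gmono \<Rightarrow> 'a gmono" where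
  "gm_mult t1 t2 = (let h = (\<lambda>x. if x = vout t2 then 2 * vin t1 else 2 * x + 1) in
     \<lparr> gr = \<lparr> verts = (\<lambda>x. 2 * x) ` verts (gr t1) \<union> h ` verts (gr t2),
               edges = (\<lambda>e. 2 * e) ` edges (gr t1) \<union> (\<lambda>e. 2 * e + 1) ` edges (gr t2),
               src = (\<lambda>e. if even e then 2 * src (gr t1) (e div 2) else h (src (gr t2) (e div 2))),
               tgt = (\<lambda>e. if even e then 2 * tgt (gr t1) (e div 2) else h (tgt (gr t2) (e div 2))),
               lab = (\<lambda>e. if even e then lab (gr t1) (e div 2) else lab (gr t2) (e div 2)) \<rparr>,
       vin = h (vin t2), vout = 2 * vout t1 \<rparr>)"

definition delta :: "'a gmono \<Rightarrow> (nat, 'a) tgraph" where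
  "delta t = identify_graph (gr t) (vout t) (vin t)"

definition block_of :: "'v set set \<Rightarrow> 'v \<Rightarrow> 'v set" where
  "block_of P x = (THE B. B \<in> P \<and> x \<in> B)"

definition quotient_graph :: "('v, 'a) tgraph \<Rightarrow> 'v set set \<Rightarrow> ('v set, 'a) tgraph" where
  "quotient_graph G P = \<lparr> verts = P, edges = edges G,
      src = block_of P \<circ> src G, tgt = block_of P \<circ> tgt G, lab = lab G \<rparr>"

text \<open>Loops (n=1) and pairs of parallel edges (n=2) are included.\<close>
definition simple_cycle :: "('v, 'a) tgraph \<Rightarrow> nat set \<Rightarrow> bool" where
  "simple_cycle G C \<longleftrightarrow> (\<exists>es xs. es \<noteq> [] \<and> distinct es \<and> distinct xs \<and>
     length xs = length es \<and> set es = C \<and> C \<subseteq> edges G \<and>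
     (\<forall>i < length es. {src G (es ! i), tgt G (es ! i)} = {xs ! i, xs ! ((i + 1) mod length es)}))"

definition is_cactus :: "('v, 'a) tgraph \<Rightarrow> bool" where
  "is_cactus G \<longleftrightarrow> connected_graph G \<and> (\<forall>e\<in>edges G. \<exists>!C. simple_cycle G C \<and> e \<in> C)"

definition pads :: "('v, 'a) tgraph \<Rightarrow> nat set set" where
  "pads G = {C. simple_cycle G C}"

definition oriented_listing :: "('v, 'a) tgraph \<Rightarrow> nat set \<Rightarrow> nat list \<Rightarrow> bool" where
  "oriented_listing G C es \<longleftrightarrow> distinct es \<and> set es = C \<and>
     (\<forall>i < length es. src G (es ! i) = tgt G (es ! ((i + 1) mod length es)))"

definition oriented_cactus :: "('v, 'a) tgraph \<Rightarrow> bool" where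
  "oriented_cactus G \<longleftrightarrow> is_cactus G \<and> (\<forall>C\<in>pads G. \<exists>es. oriented_listing G C es)"

definition tau0 :: "('a::ring_1 \<Rightarrow> complex) \<Rightarrow> ('v, 'a) tgraph \<Rightarrow> complex" where
  "tau0 \<phi> G = (if oriented_cactus G then
      (\<Prod>C\<in>pads G. free_cumulant \<phi> (map (lab G) (SOME es. oriented_listing G C es)))
    else 0)"

definition tau :: "('a::ring_1 \<Rightarrow> complex) \<Rightarrow> ('v, 'a) tgraph \<Rightarrow> complex" where
  "tau \<phi> G = (\<Sum>P\<in>{P. partition_on (verts G) P}. tau0 \<phi> (quotient_graph G P))"

definition psi :: "('a::ring_1 \<Rightarrow> complex) \<Rightarrow> 'a gmono \<Rightarrow> complex" where
  "psi \<phi> t = tau \<phi> (delta t)"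

type_synonym 'a lcomb = "(complex \<times> 'a gmono) list"

definition wf_lcomb :: "'a lcomb \<Rightarrow> bool" where
  "wf_lcomb u \<longleftrightarrow> (\<forall>p\<in>set u. wf_gmono (snd p))"

definition lc_mult :: "'a lcomb \<Rightarrow> 'a lcomb \<Rightarrow> 'a lcomb" where
  "lc_mult xs ys = [(fst p * fst q, gm_mult (snd p) (snd q)). p \<leftarrow> xs, q \<leftarrow> ys]"

definition lc_diff :: "'a lcomb \<Rightarrow> 'a lcomb \<Rightarrow> 'a lcomb" where
  "lc_diff xs ys = xs @ map (\<lambda>p. (- fst p, snd p)) ys"

definition lc_psi :: "('a::ring_1 \<Rightarrow> complex) \<Rightarrow> 'a lcomb \<Rightarrow> complex" where
  "lc_psi \<phi> xs = (\<Sum>p\<leftarrow>xs. fst p * psi \<phi> (snd p))"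

definition equiv_mod_psi :: "('a::ring_1 \<Rightarrow> complex) \<Rightarrow> 'a lcomb \<Rightarrow> 'a lcomb \<Rightarrow> bool" where
  "equiv_mod_psi \<phi> s t \<longleftrightarrow> (\<forall>u. wf_lcomb u \<longrightarrow> lc_psi \<phi> (lc_mult (lc_diff s t) u) = 0)"

definition edge_conn :: "('v, 'a) tgraph \<Rightarrow> 'v \<Rightarrow> 'v \<Rightarrow> nat" where
  "edge_conn G v w = (LEAST k. \<exists>F \<subseteq> edges G. card F = k \<and> \<not> joined G (edges G - F) v w)"

end

(*
  For a test monomial s write X = t s; the copies of v and w in X are 3-edge-connected there.
  psi(t_{v~w} s) and psi(X) are tau of the graph of X with input and output identified, the former
  with v and w identified as well. Expanding tau as a sum of tau0 over partitions of the vertices of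
  X, the terms of psi(t_{v~w} s) are exactly the terms of psi(X) whose partition puts v and w into one
  block. The remaining terms vanish: their quotient graph would be a cactus containing two distinct
  vertices that stay joined after deleting any two edges, whereas in a cactus deleting the (at most
  two) edges of a pad at p separates p from the far end of the first edge of a path leaving p.
*)
theory Submission
  imports Defs "HOL-Library.Transitive_Closure_Table"
begin

section \<open>Undirected connectivity\<close>

lemma rtrancl_map:
  assumes "(x, y) \<in> R\<^sup>*" and "\<And>a b. (a, b) \<in> R \<Longrightarrow> (f a, f b) \<in> S"
  shows "(f x, f y) \<in> S\<^sup>*"
  using assms(1) by (induction rule: rtrancl_induct) (auto intro: rtrancl_into_rtrancl assms(2))

lemma adj_rel_iff: "(u, w) \<in> adj_rel G F \<longleftrightarrow> (\<exists>e\<in>F. {src G e, tgt G e} = {u, w})"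
  unfolding adj_rel_def by (auto simp: doubleton_eq_iff)

lemma joined_sym:
  assumes "joined G F x y"
  shows "joined G F y x"
proof -
  have "(adj_rel G F)\<inverse> = adj_rel G F"
    unfolding adj_rel_def by auto
  then show ?thesis
    using assms rtrancl_converseI[of x y "adj_rel G F"] unfolding joined_def by simp
qed

lemma joined_trans: "joined G F x y \<Longrightarrow> joined G F y z \<Longrightarrow> joined G F x z"
  unfolding joined_def by (rule rtrancl_trans)

lemma joined_hom:
  assumes "\<And>e. e \<in> F \<Longrightarrow> \<epsilon> e \<in> F' \<and> src H (\<epsilon> e) = h (src G e) \<and> tgt H (\<epsilon> e) = h (tgt G e)"
    and "joined G F x y"
  shows "joined H F' (h x) (h y)"
proof -
  have "(h a, h b) \<in> adj_rel H F'" if "(a, b) \<in> adj_rel G F" for a b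
    using that assms(1) unfolding adj_rel_def by fastforce
  then show ?thesis
    using assms(2) unfolding joined_def by (blast intro: rtrancl_map)
qed

lemma joined_mono:
  assumes "F \<subseteq> F'" and "joined G F x y"
  shows "joined G F' x y"
proof -
  have "adj_rel G F \<subseteq> adj_rel G F'"
    using assms(1) unfolding adj_rel_def by blast
  then show ?thesis
    using assms(2) unfolding joined_def by (meson rtrancl_mono subsetD)
qed

lemma joined_avoiding:
  assumes "rtrancl_path (\<lambda>a b. (a, b) \<in> adj_rel G F) x zs y" and "p \<notin> set (x # zs)"
  shows "joined G {e \<in> F. p \<notin> {src G e, tgt G e}} x y"
  using assms
proof (induction rule: rtrancl_path.induct)
  case (base x)
  show ?case
    unfolding joined_def by simp
next
  case (step x y ys z)
  then have "(x, y) \<in> adj_rel G {e \<in> F. p \<notin> {src G e, tgt G e}}"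
    unfolding adj_rel_iff by auto
  with step show ?case
    unfolding joined_def by (simp add: converse_rtrancl_into_rtrancl)
qed

lemma joined_exit_edge:
  assumes "joined G F p q" and "p \<noteq> q"
  obtains e x where "e \<in> F" and "{src G e, tgt G e} = {p, x}" and "p \<noteq> x"
    and "joined G {g \<in> F. p \<notin> {src G g, tgt G g}} x q"
proof -
  have "(\<lambda>a b. (a, b) \<in> adj_rel G F)\<^sup>*\<^sup>* p q"
    using assms(1) unfolding joined_def by (simp add: rtranclp_rtrancl_eq)
  then obtain ys where path: "rtrancl_path (\<lambda>a b. (a, b) \<in> adj_rel G F) p ys q"
    and dist: "distinct (p # ys)"
    by (metis rtranclp_eq_rtrancl_path rtrancl_path_distinct)
  then obtain x zs where "(p, x) \<in> adj_rel G F" and "ys = x # zs"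
    and rest: "rtrancl_path (\<lambda>a b. (a, b) \<in> adj_rel G F) x zs q"
    using assms(2) by (cases rule: rtrancl_path.cases) auto
  moreover have "p \<notin> set (x # zs)"
    using dist \<open>ys = x # zs\<close> by simp
  ultimately show ?thesis
    using that joined_avoiding[OF rest] unfolding adj_rel_iff by auto
qed

(* A predicate form of k \<le> edge_conn G x y: edge_conn is a LEAST over a set of cardinalities
   that is empty when no edge set separates x from y. *)
definition edge_connected :: "('v, 'a) tgraph \<Rightarrow> nat \<Rightarrow> 'v \<Rightarrow> 'v \<Rightarrow> bool" where
  "edge_connected G k x y \<longleftrightarrow> (\<forall>F \<subseteq> edges G. card F < k \<longrightarrow> joined G (edges G - F) x y)"

lemma edge_connected_if_le_edge_conn:
  assumes "k \<le> edge_conn G x y"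
  shows "edge_connected G k x y"
  unfolding edge_connected_def
proof (intro allI impI)
  fix F assume "F \<subseteq> edges G" and "card F < k"
  show "joined G (edges G - F) x y"
  proof (rule ccontr)
    assume "\<not> joined G (edges G - F) x y"
    with \<open>F \<subseteq> edges G\<close> have "edge_conn G x y \<le> card F"
      unfolding edge_conn_def by (blast intro: Least_le)
    with assms \<open>card F < k\<close> show False
      by linarith
  qed
qed

lemma edge_connected_hom:
  assumes "inj_on \<epsilon> (edges G)" and "\<epsilon> ` edges G \<subseteq> edges H" and "finite (edges H)"
    and "\<And>e. e \<in> edges G \<Longrightarrow> src H (\<epsilon> e) = h (src G e) \<and> tgt H (\<epsilon> e) = h (tgt G e)"
    and "edge_connected G k x y"
  shows "edge_connected H k (h x) (h y)"
  unfolding edge_connected_def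
proof (intro allI impI)
  fix F assume "F \<subseteq> edges H" and "card F < k"
  define F' where "F' = {e \<in> edges G. \<epsilon> e \<in> F}"
  have "card F' \<le> card F"
    using assms(1) \<open>F \<subseteq> edges H\<close> assms(3) unfolding F'_def
    by (intro card_inj_on_le) (auto intro: inj_on_subset finite_subset)
  then have "joined G (edges G - F') x y"
    using assms(5) \<open>card F < k\<close> unfolding edge_connected_def F'_def by auto
  then show "joined H (edges H - F) (h x) (h y)"
    by (rule joined_hom[rotated]) (use assms(2,4) in \<open>auto simp: F'_def\<close>)
qed

section \<open>Graph isomorphisms\<close>

definition tgraph_iso :: "('v \<Rightarrow> 'w) \<Rightarrow> ('v, 'a) tgraph \<Rightarrow> ('w, 'a) tgraph \<Rightarrow> bool" where
  "tgraph_iso k G G' \<longleftrightarrow> inj_on k (verts G) \<and> verts G' = k ` verts G \<and> edges G' = edges G \<and>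
     lab G' = lab G \<and> (\<forall>e\<in>edges G. src G e \<in> verts G \<and> tgt G e \<in> verts G \<and>
        src G' e = k (src G e) \<and> tgt G' e = k (tgt G e))"

lemma tgraph_iso_inv:
  assumes "tgraph_iso k G G'"
  shows "tgraph_iso (inv_into (verts G) k) G' G"
  using assms unfolding tgraph_iso_def
  by (auto simp: inj_on_inv_into inv_into_image_cancel inv_into_f_f)

lemma tgraph_iso_connected:
  assumes "tgraph_iso k G G'" and "connected_graph G"
  shows "connected_graph G'"
  unfolding connected_graph_def
proof (intro ballI)
  fix u w assume "u \<in> verts G'" "w \<in> verts G'"
  then obtain u0 w0 where "u0 \<in> verts G" "w0 \<in> verts G" "u = k u0" "w = k w0"
    using assms(1) unfolding tgraph_iso_def by blast
  moreover have "joined G (edges G) u0 w0"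
    using assms(2) \<open>u0 \<in> verts G\<close> \<open>w0 \<in> verts G\<close> unfolding connected_graph_def by blast
  moreover have "e \<in> edges G' \<and> src G' e = k (src G e) \<and> tgt G' e = k (tgt G e)" if "e \<in> edges G" for e
    using assms(1) that unfolding tgraph_iso_def by auto
  ultimately show "joined G' (edges G') u w"
    using joined_hom[where \<epsilon> = "\<lambda>e. e" and h = k] by blast
qed

lemma tgraph_iso_simple_cycle:
  assumes "tgraph_iso k G G'" and "simple_cycle G C"
  shows "simple_cycle G' C"
proof -
  obtain es xs where cyc: "es \<noteq> []" "distinct es" "distinct xs" "length xs = length es" "set es = C"
    "C \<subseteq> edges G"
    "\<forall>i < length es. {src G (es ! i), tgt G (es ! i)} = {xs ! i, xs ! ((i + 1) mod length es)}"
    using assms(2) unfolding simple_cycle_def by blast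
  have iso: "inj_on k (verts G)" "edges G' = edges G"
    "\<forall>e\<in>edges G. src G e \<in> verts G \<and> tgt G e \<in> verts G \<and> src G' e = k (src G e) \<and> tgt G' e = k (tgt G e)"
    using assms(1) unfolding tgraph_iso_def by auto
  have es_edges: "es ! i \<in> edges G" if "i < length es" for i
    using that cyc(5,6) nth_mem by blast
  have succ_less: "(i + 1) mod length es < length es" for i
    using cyc(1) by simp
  have "set xs \<subseteq> verts G"
  proof
    fix x assume "x \<in> set xs"
    then obtain i where i: "i < length es" "x = xs ! i"
      using cyc(4) by (metis in_set_conv_nth)
    then have "x \<in> {src G (es ! i), tgt G (es ! i)}"
      using cyc(7) by simp
    then show "x \<in> verts G"
      using iso(3) es_edges[OF i(1)] by auto
  qed
  then have "distinct (map k xs)"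
    using cyc(3) iso(1) by (simp add: distinct_map inj_on_subset)
  moreover have "{src G' (es ! i), tgt G' (es ! i)} = {map k xs ! i, map k xs ! ((i + 1) mod length es)}"
    if i: "i < length es" for i
  proof -
    have "{src G' (es ! i), tgt G' (es ! i)} = k ` {src G (es ! i), tgt G (es ! i)}"
      using iso(3) es_edges[OF i] by auto
    also have "\<dots> = k ` {xs ! i, xs ! ((i + 1) mod length es)}"
      using cyc(7) i by simp
    also have "\<dots> = {map k xs ! i, map k xs ! ((i + 1) mod length es)}"
      using i succ_less cyc(4) by simp
    finally show ?thesis .
  qed
  ultimately show ?thesis
    unfolding simple_cycle_def using cyc iso(2) by (intro exI[of _ es] exI[of _ "map k xs"]) auto
qed

lemma tgraph_iso_oriented_listing:
  assumes "tgraph_iso k G G'" and "C \<subseteq> edges G" and "oriented_listing G C es"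
  shows "oriented_listing G' C es"
  unfolding oriented_listing_def
proof (intro conjI allI impI)
  show "distinct es" "set es = C"
    using assms(3) unfolding oriented_listing_def by simp_all
  fix i assume i: "i < length es"
  have succ: "(i + 1) mod length es < length es"
    by (rule mod_less_divisor) (use i in linarith)
  have "es ! i \<in> edges G" "es ! ((i + 1) mod length es) \<in> edges G"
    using i succ \<open>set es = C\<close> assms(2) nth_mem by blast+
  then show "src G' (es ! i) = tgt G' (es ! ((i + 1) mod length es))"
    using assms(1,3) i unfolding tgraph_iso_def oriented_listing_def by simp
qed

lemma tau0_tgraph_iso:
  assumes "tgraph_iso k G G'"
  shows "tau0 \<phi> G' = tau0 \<phi> G"
proof -
  note inv = tgraph_iso_inv[OF assms]
  have same: "edges G' = edges G" "lab G' = lab G"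
    using assms unfolding tgraph_iso_def by auto
  have cycles: "simple_cycle G' = simple_cycle G"
    using tgraph_iso_simple_cycle[OF assms] tgraph_iso_simple_cycle[OF inv] by blast
  then have pads: "pads G' = pads G"
    unfolding pads_def by simp
  have cactus: "is_cactus G' = is_cactus G"
    unfolding is_cactus_def cycles same
    using tgraph_iso_connected[OF assms] tgraph_iso_connected[OF inv] by blast
  have listing: "oriented_listing G' C = oriented_listing G C" if "C \<in> pads G" for C
  proof -
    have "C \<subseteq> edges G"
      using that unfolding pads_def simple_cycle_def by blast
    then have "oriented_listing G' C es \<longleftrightarrow> oriented_listing G C es" for es
      using tgraph_iso_oriented_listing[OF assms] tgraph_iso_oriented_listing[OF inv, of C es] same(1)
      by auto
    then show ?thesis
      by (intro ext)
  qed
  then have "oriented_cactus G' = oriented_cactus G"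
    unfolding oriented_cactus_def using cactus pads by simp
  then show ?thesis
    unfolding tau0_def using pads listing same(2) by (auto intro!: prod.cong)
qed

section \<open>Renaming vertices\<close>

lemma block_of_eq:
  assumes "partition_on A P" and "B \<in> P" and "x \<in> B"
  shows "block_of P x = B"
  unfolding block_of_def
proof (rule the_equality)
  fix B' assume "B' \<in> P \<and> x \<in> B'"
  then show "B' = B"
    using assms unfolding partition_on_def disjoint_def by blast
qed (use assms in simp)

lemma block_of_in:
  assumes "partition_on A P" and "x \<in> A"
  shows "block_of P x \<in> P" and "x \<in> block_of P x"
proof -
  obtain B where "B \<in> P" "x \<in> B"
    using assms unfolding partition_on_def by blast
  then show "block_of P x \<in> P" "x \<in> block_of P x"
    using block_of_eq[OF assms(1)] by simp_all
qed

lemma partition_on_block_subset: "partition_on A P \<Longrightarrow> B \<in> P \<Longrightarrow> B \<subseteq> A"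
  using partition_onD1[of A P] by auto

definition map_verts :: "('v \<Rightarrow> 'w) \<Rightarrow> ('v, 'a) tgraph \<Rightarrow> ('w, 'a) tgraph" where
  "map_verts f G = \<lparr> verts = f ` verts G, edges = edges G, src = f \<circ> src G, tgt = f \<circ> tgt G,
     lab = lab G \<rparr>"

lemma identify_graph_eq_map_verts: "identify_graph G v w = map_verts (merge_vertex v w) G"
  unfolding identify_graph_def map_verts_def by simp

lemma map_verts_map_verts: "map_verts g (map_verts f G) = map_verts (g \<circ> f) G"
  unfolding map_verts_def by (simp add: image_comp comp_assoc)

definition coarsens_kernel :: "('v \<Rightarrow> 'w) \<Rightarrow> 'v set \<Rightarrow> 'v set set \<Rightarrow> bool" where
  "coarsens_kernel f V P \<longleftrightarrow> (\<forall>B\<in>P. \<forall>x\<in>V. \<forall>y\<in>B. f x = f y \<longrightarrow> x \<in> B)"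

definition fibres :: "('v \<Rightarrow> 'w) \<Rightarrow> 'v set \<Rightarrow> 'w set \<Rightarrow> 'v set" where
  "fibres f V B = V \<inter> f -` B"

lemma partition_on_fibres:
  assumes "partition_on (f ` V) Q"
  shows "partition_on V (fibres f V ` Q)" and "coarsens_kernel f V (fibres f V ` Q)"
proof -
  have "partition_on (fibres f V (f ` V)) (fibres f V ` Q - {{}})"
  proof (rule partition_on_transform[OF assms])
    show "\<Union> (fibres f V ` Q) = fibres f V (\<Union> Q)"
      unfolding fibres_def by blast
    show "disjnt (fibres f V p) (fibres f V q)" if "disjnt p q" for p q
      using that unfolding fibres_def disjnt_iff by blast
  qed
  moreover have "fibres f V B \<noteq> {}" if B: "B \<in> Q" for B
  proof -
    obtain y where "y \<in> B"
      using B partition_onD3[OF assms] by (metis all_not_in_conv)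
    moreover have "B \<subseteq> f ` V"
      using partition_on_block_subset[OF assms B] .
    ultimately show ?thesis
      unfolding fibres_def by blast
  qed
  moreover have "fibres f V (f ` V) = V"
    unfolding fibres_def by blast
  ultimately show "partition_on V (fibres f V ` Q)"
    by (metis (no_types, lifting) Diff_empty Diff_insert0 image_iff)
  show "coarsens_kernel f V (fibres f V ` Q)"
    unfolding coarsens_kernel_def fibres_def by auto
qed

lemma partition_on_image_blocks:
  assumes "partition_on V P" and "coarsens_kernel f V P"
  shows "partition_on (f ` V) ((`) f ` P)"
proof -
  have "disjnt (f ` p) (f ` q)" if "p \<in> P" "q \<in> P" "disjnt p q" for p q
  proof -
    have "a \<in> q" if "a \<in> p" "b \<in> q" "f a = f b" for a b
      using assms(2) partition_on_block_subset[OF assms(1) \<open>p \<in> P\<close>] \<open>q \<in> P\<close> that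
      unfolding coarsens_kernel_def by blast
    then show ?thesis
      using \<open>disjnt p q\<close> unfolding disjnt_iff by blast
  qed
  then have "partition_on (f ` V) ((`) f ` P - {{}})"
    by (intro partition_on_transform[OF assms(1)]) auto
  moreover have "{} \<notin> (`) f ` P"
    using partition_onD3[OF assms(1)] by auto
  ultimately show ?thesis
    by simp
qed

lemma fibres_image_blocks:
  assumes "partition_on V P" and "coarsens_kernel f V P"
  shows "fibres f V ` (`) f ` P = P"
proof -
  have "fibres f V (f ` B) = B" if "B \<in> P" for B
    using that assms(2) partition_on_block_subset[OF assms(1)] unfolding fibres_def coarsens_kernel_def
    by blast
  then show ?thesis
    by (simp add: image_image)
qed

lemma image_blocks_fibres:
  assumes "partition_on (f ` V) Q"
  shows "(`) f ` fibres f V ` Q = Q"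
proof -
  have "f ` fibres f V B = B" if "B \<in> Q" for B
    using partition_on_block_subset[OF assms that] unfolding fibres_def by auto
  then show ?thesis
    by (simp add: image_image)
qed

lemma tgraph_iso_quotient_map_verts:
  assumes G: "\<forall>e\<in>edges G. src G e \<in> verts G \<and> tgt G e \<in> verts G"
    and Q: "partition_on (f ` verts G) Q"
  shows "tgraph_iso (fibres f (verts G)) (quotient_graph (map_verts f G) Q)
    (quotient_graph G (fibres f (verts G) ` Q))"
proof -
  let ?k = "fibres f (verts G)"
  have "f ` ?k B = B" if "B \<in> Q" for B
    using partition_on_block_subset[OF Q that] unfolding fibres_def by auto
  then have "inj_on ?k Q"
    by (rule inj_on_inverseI[where g = "image f"])
  moreover have "block_of (?k ` Q) x = ?k (block_of Q (f x))
      \<and> block_of Q (f x) \<in> Q" if "x \<in> verts G" for x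
  proof -
    have "block_of Q (f x) \<in> Q" "f x \<in> block_of Q (f x)"
      using block_of_in[OF Q] that by simp_all
    moreover have "x \<in> ?k (block_of Q (f x))"
      using that \<open>f x \<in> block_of Q (f x)\<close> unfolding fibres_def by blast
    ultimately show ?thesis
      using block_of_eq[OF partition_on_fibres(1)[OF Q]] by blast
  qed
  ultimately show ?thesis
    using G unfolding tgraph_iso_def quotient_graph_def map_verts_def by simp
qed

lemma tau_map_verts:
  assumes "wf_graph G"
  shows "tau \<phi> (map_verts f G) =
    (\<Sum>P | partition_on (verts G) P \<and> coarsens_kernel f (verts G) P. tau0 \<phi> (quotient_graph G P))"
proof -
  let ?V = "verts G"
  have ends: "\<forall>e\<in>edges G. src G e \<in> ?V \<and> tgt G e \<in> ?V"
    using assms unfolding wf_graph_def by blast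
  have "tau \<phi> (map_verts f G) = (\<Sum>Q | partition_on (f ` ?V) Q. tau0 \<phi> (quotient_graph (map_verts f G) Q))"
    unfolding tau_def by (simp add: map_verts_def)
  also have "\<dots> = (\<Sum>P | partition_on ?V P \<and> coarsens_kernel f ?V P. tau0 \<phi> (quotient_graph G P))"
  proof (rule sum.reindex_bij_witness[where j = "(`) (fibres f ?V)" and i = "(`) ((`) f)"])
    fix Q assume "Q \<in> {Q. partition_on (f ` ?V) Q}"
    then have Q: "partition_on (f ` ?V) Q" by simp
    show "(`) f ` fibres f ?V ` Q = Q"
      using image_blocks_fibres[OF Q] .
    show "fibres f ?V ` Q \<in> {P. partition_on ?V P \<and> coarsens_kernel f ?V P}"
      using partition_on_fibres[OF Q] by simp
    show "tau0 \<phi> (quotient_graph G (fibres f ?V ` Q)) = tau0 \<phi> (quotient_graph (map_verts f G) Q)"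
      by (rule tau0_tgraph_iso[OF tgraph_iso_quotient_map_verts[OF ends Q]])
  next
    fix P assume "P \<in> {P. partition_on ?V P \<and> coarsens_kernel f ?V P}"
    then have P: "partition_on ?V P" "coarsens_kernel f ?V P" by simp_all
    show "fibres f ?V ` (`) f ` P = P"
      using fibres_image_blocks[OF P] .
    show "(`) f ` P \<in> {Q. partition_on (f ` ?V) Q}"
      using partition_on_image_blocks[OF P] by simp
  qed
  finally show ?thesis .
qed

lemma merge_vertex_eq_iff:
  "merge_vertex a b u = merge_vertex a b z \<longleftrightarrow> u = z \<or> u \<in> {a, b} \<and> z \<in> {a, b}"
  unfolding merge_vertex_def by auto

lemma coarsens_kernel_iff_block_of:
  assumes "partition_on V P"
  shows "coarsens_kernel f V P \<longleftrightarrow> (\<forall>u\<in>V. \<forall>z\<in>V. f u = f z \<longrightarrow> block_of P u = block_of P z)"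
  unfolding coarsens_kernel_def
proof (intro iffI ballI impI)
  fix u z assume coarse: "\<forall>B\<in>P. \<forall>x\<in>V. \<forall>y\<in>B. f x = f y \<longrightarrow> x \<in> B"
    and "u \<in> V" "z \<in> V" "f u = f z"
  then have "u \<in> block_of P z"
    using block_of_in[OF assms \<open>z \<in> V\<close>] by blast
  then show "block_of P u = block_of P z"
    using block_of_eq[OF assms] block_of_in[OF assms \<open>z \<in> V\<close>] by blast
next
  fix B u z assume blocks: "\<forall>u\<in>V. \<forall>z\<in>V. f u = f z \<longrightarrow> block_of P u = block_of P z"
    and "B \<in> P" "u \<in> V" "z \<in> B" "f u = f z"
  then have "block_of P u = B"
    using block_of_eq[OF assms] partition_on_block_subset[OF assms] by blast
  then show "u \<in> B"
    using block_of_in[OF assms \<open>u \<in> V\<close>] by simp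
qed

lemma coarsens_kernel_id: "coarsens_kernel id V P"
  unfolding coarsens_kernel_def by simp

lemma coarsens_kernel_merge_iff:
  assumes "partition_on V P" and "x \<in> V" and "y \<in> V"
  shows "coarsens_kernel (merge_vertex (f x) (f y) \<circ> f) V P \<longleftrightarrow>
    coarsens_kernel f V P \<and> block_of P x = block_of P y"
proof -
  let ?same = "\<lambda>g. \<forall>u\<in>V. \<forall>z\<in>V. g u = g z \<longrightarrow> block_of P u = block_of P z"
  have "?same (merge_vertex (f x) (f y) \<circ> f) \<longleftrightarrow> ?same f \<and> block_of P x = block_of P y"
  proof
    assume merged: "?same (merge_vertex (f x) (f y) \<circ> f)"
    have "block_of P u = block_of P z" if "u \<in> V" "z \<in> V" "f u = f z" for u z
    proof -
      have "(merge_vertex (f x) (f y) \<circ> f) u = (merge_vertex (f x) (f y) \<circ> f) z"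
        using that(3) by simp
      then show ?thesis
        using merged that(1,2) by blast
    qed
    moreover have "block_of P x = block_of P y"
    proof -
      have "(merge_vertex (f x) (f y) \<circ> f) x = (merge_vertex (f x) (f y) \<circ> f) y"
        by (simp add: merge_vertex_def)
      then show ?thesis
        using merged assms(2,3) by blast
    qed
    ultimately show "?same f \<and> block_of P x = block_of P y"
      by blast
  next
    assume "?same f \<and> block_of P x = block_of P y"
    then have coarse: "?same f" and xy: "block_of P x = block_of P y"
      by blast+
    have to_x: "block_of P u = block_of P x" if u: "u \<in> V" and fu: "f u \<in> {f x, f y}" for u
    proof -
      consider "f u = f x" | "f u = f y"
        using fu by blast
      then show ?thesis
      proof cases
        case 1
        then show ?thesis
          using coarse u assms(2) by blast
      next
        case 2
        then show ?thesis
          using coarse u assms(3) xy by blast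
      qed
    qed
    show "?same (merge_vertex (f x) (f y) \<circ> f)"
    proof (intro ballI impI)
      fix u z assume "u \<in> V" "z \<in> V" "(merge_vertex (f x) (f y) \<circ> f) u = (merge_vertex (f x) (f y) \<circ> f) z"
      then have "f u = f z \<or> f u \<in> {f x, f y} \<and> f z \<in> {f x, f y}"
        by (simp add: merge_vertex_eq_iff)
      then show "block_of P u = block_of P z"
        using coarse to_x \<open>u \<in> V\<close> \<open>z \<in> V\<close> by metis
    qed
  qed
  then show ?thesis
    unfolding coarsens_kernel_iff_block_of[OF assms(1)] .
qed

section \<open>Cacti\<close>

lemma add_1_mod_inj:
  fixes i j n :: nat
  assumes "i < n" and "j < n" and "(i + 1) mod n = (j + 1) mod n"
  shows "i = j"
  using assms by (auto simp: mod_Suc split: if_splits)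

lemma card_nth_eq_le_1:
  fixes n :: nat
  assumes "distinct xs" and "inj_on f {..<n}" and "\<And>i. i < n \<Longrightarrow> f i < length xs"
  shows "card {i. i < n \<and> xs ! f i = p} \<le> 1"
proof -
  have "\<forall>i\<in>{i. i < n \<and> xs ! f i = p}. \<forall>j\<in>{i. i < n \<and> xs ! f i = p}. i = j"
    using assms by (auto simp: nth_eq_iff_index_eq inj_on_def)
  moreover have "finite {i. i < n \<and> xs ! f i = p}"
    by simp
  ultimately show ?thesis
    using card_le_Suc0_iff_eq[of "{i. i < n \<and> xs ! f i = p}"] by simp
qed

lemma simple_cycle_incident_card_le:
  assumes "simple_cycle G C"
  shows "card {e \<in> C. p \<in> {src G e, tgt G e}} \<le> 2"
proof -
  obtain es xs where cyc: "distinct xs" "length xs = length es" "set es = C"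
    "\<forall>i < length es. {src G (es ! i), tgt G (es ! i)} = {xs ! i, xs ! ((i + 1) mod length es)}"
    using assms unfolding simple_cycle_def by blast
  define n where "n = length es"
  let ?I1 = "{i. i < n \<and> xs ! i = p}" and ?I2 = "{i. i < n \<and> xs ! ((i + 1) mod n) = p}"
  have "{e \<in> C. p \<in> {src G e, tgt G e}} \<subseteq> (!) es ` (?I1 \<union> ?I2)"
  proof
    fix e assume "e \<in> {e \<in> C. p \<in> {src G e, tgt G e}}"
    then obtain i where "i < n" "e = es ! i" "p \<in> {src G e, tgt G e}"
      using cyc(3) unfolding n_def by (auto simp: in_set_conv_nth)
    then show "e \<in> (!) es ` (?I1 \<union> ?I2)"
      using cyc(4) unfolding n_def by auto
  qed
  moreover have "finite (?I1 \<union> ?I2)"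
    by simp
  ultimately have "card {e \<in> C. p \<in> {src G e, tgt G e}} \<le> card (?I1 \<union> ?I2)"
    by (meson card_image_le card_mono finite_imageI le_trans)
  also have "\<dots> \<le> card ?I1 + card ?I2"
    by (rule card_Un_le)
  also have "\<dots> \<le> 1 + 1"
  proof (rule add_mono)
    show "card ?I1 \<le> 1"
      using card_nth_eq_le_1[OF cyc(1), of id n p] cyc(2) unfolding n_def by simp
    have "inj_on (\<lambda>i. (i + 1) mod n) {..<n}"
      using add_1_mod_inj by (auto simp: inj_on_def)
    moreover have "(i + 1) mod n < length xs" if "i < n" for i
      using that cyc(2) unfolding n_def by (metis mod_less_divisor not_less0 neq0_conv)
    ultimately show "card ?I2 \<le> 1"
      using card_nth_eq_le_1[OF cyc(1), of "\<lambda>i. (i + 1) mod n" n p] by simp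
  qed
  finally show ?thesis
    by simp
qed

lemma simple_path_distinct_edges:
  assumes "rtrancl_path (\<lambda>a b. (a, b) \<in> adj_rel G F) x ys y" and "distinct (x # ys)"
  shows "\<exists>es. length es = length ys \<and> distinct es \<and> set es \<subseteq> F \<and>
    (\<forall>i < length ys. {src G (es ! i), tgt G (es ! i)} = {(x # ys) ! i, ys ! i})"
  using assms
proof (induction rule: rtrancl_path.induct)
  case (base x)
  show ?case by simp
next
  case (step x y ys z)
  obtain es where es: "length es = length ys" "distinct es" "set es \<subseteq> F"
    "\<forall>i < length ys. {src G (es ! i), tgt G (es ! i)} = {(y # ys) ! i, ys ! i}"
    using step.IH step.prems by auto
  obtain e where e: "e \<in> F" "{src G e, tgt G e} = {x, y}"
    using step.hyps(1) unfolding adj_rel_iff by blast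
  have "e \<notin> set es"
  proof
    assume "e \<in> set es"
    then obtain i where "i < length ys" "es ! i = e"
      using es(1) by (auto simp: in_set_conv_nth)
    then have "x \<in> {(y # ys) ! i, ys ! i}"
      using es(4) e(2) by (metis insertI1)
    moreover have "(y # ys) ! i \<in> set (y # ys)" "ys ! i \<in> set (y # ys)"
      using \<open>i < length ys\<close> by (simp_all add: nth_Cons')
    ultimately have "x \<in> set (y # ys)"
      by blast
    then show False
      using step.prems by simp
  qed
  then show ?case
    using es e by (intro exI[of _ "e # es"]) (auto simp: nth_Cons split: nat.split)
qed

lemma simple_cycle_through_edge:
  assumes "e \<in> edges G" and "{src G e, tgt G e} = {p, x}" and "p \<noteq> x"
    and "F \<subseteq> edges G" and "e \<notin> F" and "joined G F p x"
  obtains C g where "simple_cycle G C" and "e \<in> C" and "g \<in> C \<inter> F" and "p \<in> {src G g, tgt G g}"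
proof -
  have "(\<lambda>a b. (a, b) \<in> adj_rel G F)\<^sup>*\<^sup>* p x"
    using assms(6) unfolding joined_def by (simp add: rtranclp_rtrancl_eq)
  then obtain ws where path: "rtrancl_path (\<lambda>a b. (a, b) \<in> adj_rel G F) p ws x"
    and dist: "distinct (p # ws)"
    by (metis rtranclp_eq_rtrancl_path rtrancl_path_distinct)
  have "ws \<noteq> []"
    using path assms(3) by (cases rule: rtrancl_path.cases) auto
  then have last_ws: "(p # ws) ! length ws = x"
    using rtrancl_path_last[OF path] by (simp add: last_conv_nth)
  obtain es where es: "length es = length ws" "distinct es" "set es \<subseteq> F"
    "\<forall>i < length ws. {src G (es ! i), tgt G (es ! i)} = {(p # ws) ! i, ws ! i}"
    using simple_path_distinct_edges[OF path dist] by blast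
  let ?es = "es @ [e]"
  have "simple_cycle G (set ?es)"
    unfolding simple_cycle_def
  proof (intro exI[of _ ?es] exI[of _ "p # ws"] conjI allI impI)
    show "distinct ?es"
      using es(2,3) assms(5) by auto
    show "set ?es \<subseteq> edges G"
      using es(3) assms(1,4) by auto
    fix i assume i: "i < length ?es"
    show "{src G (?es ! i), tgt G (?es ! i)} = {(p # ws) ! i, (p # ws) ! ((i + 1) mod length ?es)}"
    proof (cases "i < length ws")
      case True
      then show ?thesis
        using es(1,4) by (simp add: nth_append)
    next
      case False
      then have "i = length ws"
        using i es(1) by simp
      then have "?es ! i = e" "(i + 1) mod length ?es = 0"
        using es(1) by (simp_all add: nth_append)
      then show ?thesis
        using assms(2) last_ws \<open>i = length ws\<close> by (simp add: insert_commute)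
    qed
  qed (use dist es(1) in simp_all)
  moreover have "es ! 0 \<in> set es"
    using es(1) \<open>ws \<noteq> []\<close> by simp
  moreover have "p \<in> {src G (es ! 0), tgt G (es ! 0)}"
    using es(1,4) \<open>ws \<noteq> []\<close> by simp
  ultimately show ?thesis
    using that[of "set ?es" "es ! 0"] es(3) by auto
qed

lemma cactus_edge_connected_3_eq:
  assumes "is_cactus G" and conn: "edge_connected G 3 p q"
  shows "p = q"
proof (rule ccontr)
  assume "p \<noteq> q"
  have "joined G (edges G) p q"
    using conn[unfolded edge_connected_def, rule_format, of "{}"] by simp
  then obtain e x where e: "e \<in> edges G" "{src G e, tgt G e} = {p, x}" and "p \<noteq> x"
    and avoiding: "joined G {g \<in> edges G. p \<notin> {src G g, tgt G g}} x q"
    using joined_exit_edge[OF _ \<open>p \<noteq> q\<close>] by blast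
  have p_e: "p \<in> {src G e, tgt G e}"
    using e(2) by simp
  obtain C where C: "simple_cycle G C" "e \<in> C"
    and C_unique: "\<And>C'. simple_cycle G C' \<Longrightarrow> e \<in> C' \<Longrightarrow> C' = C"
    using assms(1) e(1) unfolding is_cactus_def by metis
  \<comment> \<open>Deleting the at most two edges of C at p keeps p and x joined, closing a second cycle through e.\<close>
  define F where "F = {g \<in> C. p \<in> {src G g, tgt G g}}"
  have "F \<subseteq> edges G"
    using C(1) unfolding F_def simple_cycle_def by blast
  moreover have "card F < 3"
    using simple_cycle_incident_card_le[OF C(1), of p] unfolding F_def by linarith
  ultimately have "joined G (edges G - F) p q"
    using conn unfolding edge_connected_def by blast
  moreover have "joined G (edges G - F) x q"
    using avoiding by (rule joined_mono[rotated]) (auto simp: F_def)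
  ultimately have "joined G (edges G - F) p x"
    by (meson joined_sym joined_trans)
  moreover have "e \<notin> edges G - F"
    using C(2) p_e unfolding F_def by simp
  ultimately obtain C' g where "simple_cycle G C'" "e \<in> C'" "g \<in> C' \<inter> (edges G - F)"
    "p \<in> {src G g, tgt G g}"
    using simple_cycle_through_edge[OF e \<open>p \<noteq> x\<close>] by blast
  then show False
    using C_unique unfolding F_def by blast
qed

lemma tau0_quotient_separating_eq_0:
  assumes "finite (edges G)" and "edge_connected G 3 x y" and "block_of P x \<noteq> block_of P y"
  shows "tau0 \<phi> (quotient_graph G P) = 0"
proof -
  have conn: "edge_connected (quotient_graph G P) 3 (block_of P x) (block_of P y)"
    using assms(1,2) by (intro edge_connected_hom[where \<epsilon> = "\<lambda>e. e" and h = "block_of P"])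
      (simp_all add: quotient_graph_def)
  have "\<not> oriented_cactus (quotient_graph G P)"
  proof
    assume "oriented_cactus (quotient_graph G P)"
    then have "is_cactus (quotient_graph G P)"
      unfolding oriented_cactus_def by simp
    from cactus_edge_connected_3_eq[OF this conn] assms(3) show False
      by simp
  qed
  then show ?thesis
    unfolding tau0_def by (rule if_not_P)
qed

section \<open>Identifying a 3-edge-connected pair\<close>

lemma tau_identify_edge_connected_3:
  assumes G: "wf_graph G" and "a \<in> verts G" and "b \<in> verts G" and "x \<in> verts G" and "y \<in> verts G"
    and conn: "edge_connected G 3 x y"
  shows "tau \<phi> (identify_graph (identify_graph G x y) (merge_vertex x y a) (merge_vertex x y b)) =
    tau \<phi> (identify_graph G a b)"
proof -
  let ?V = "verts G" and ?m = "merge_vertex x y"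
  let ?S = "{P. partition_on ?V P \<and> block_of P a = block_of P b}"
  have kernel_ab: "coarsens_kernel (merge_vertex a b) ?V P \<longleftrightarrow> block_of P a = block_of P b"
    if "partition_on ?V P" for P
    using coarsens_kernel_merge_iff[OF that assms(2,3), of id] coarsens_kernel_id[of ?V P] by simp
  have kernel_xy_ab: "coarsens_kernel (merge_vertex (?m a) (?m b) \<circ> ?m) ?V P \<longleftrightarrow>
      block_of P x = block_of P y \<and> block_of P a = block_of P b"
    if "partition_on ?V P" for P
    using coarsens_kernel_merge_iff[OF that assms(2,3), of ?m] coarsens_kernel_merge_iff[OF that assms(4,5), of id]
      coarsens_kernel_id[of ?V P] by simp
  have fin: "finite ?S" "finite (edges G)"
    using G finitely_many_partition_on[of ?V] unfolding wf_graph_def by (auto elim: finite_subset[rotated])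
  have "tau \<phi> (identify_graph (identify_graph G x y) (?m a) (?m b)) =
      (\<Sum>P | partition_on ?V P \<and> coarsens_kernel (merge_vertex (?m a) (?m b) \<circ> ?m) ?V P.
        tau0 \<phi> (quotient_graph G P))"
    unfolding identify_graph_eq_map_verts map_verts_map_verts by (rule tau_map_verts[OF G])
  also have "\<dots> = (\<Sum>P \<in> {P \<in> ?S. block_of P x = block_of P y}. tau0 \<phi> (quotient_graph G P))"
    using kernel_xy_ab by (intro sum.cong) auto
  also have "\<dots> = (\<Sum>P\<in>?S. if block_of P x = block_of P y then tau0 \<phi> (quotient_graph G P) else 0)"
    by (rule sum.inter_filter[OF fin(1)])
  also have "\<dots> = (\<Sum>P\<in>?S. tau0 \<phi> (quotient_graph G P))"
    using tau0_quotient_separating_eq_0[OF fin(2) conn] by (intro sum.cong) auto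
  also have "\<dots> = tau \<phi> (identify_graph G a b)"
    unfolding identify_graph_eq_map_verts tau_map_verts[OF G] using kernel_ab by (intro sum.cong) auto
  finally show ?thesis .
qed

lemma delta_identify:
  "delta (identify X x y) =
    identify_graph (identify_graph (gr X) x y) (merge_vertex x y (vout X)) (merge_vertex x y (vin X))"
  unfolding delta_def identify_def by simp

lemma psi_identify_edge_connected_3:
  assumes "wf_graph (gr X)" and "vin X \<in> verts (gr X)" and "vout X \<in> verts (gr X)"
    and "x \<in> verts (gr X)" and "y \<in> verts (gr X)" and "edge_connected (gr X) 3 x y"
  shows "psi \<phi> (identify X x y) = psi \<phi> X"
  unfolding psi_def delta_identify
  using tau_identify_edge_connected_3[OF assms(1,3,2,4,5,6)] unfolding delta_def by simp

lemma merge_vertex_double: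
  "merge_vertex (2 * v) (2 * w) (2 * x) = 2 * merge_vertex v w x"
  "merge_vertex (2 * v) (2 * w) (Suc (2 * x)) = Suc (2 * x)"
  unfolding merge_vertex_def by presburger+

lemma gm_mult_identify: "gm_mult (identify t v w) s = identify (gm_mult t s) (2 * v) (2 * w)"
  unfolding gm_mult_def Let_def identify_def identify_graph_def
  by (simp add: fun_eq_iff image_Un image_image merge_vertex_double if_distrib comp_def)

lemma wf_graph_gm_mult:
  assumes "wf_gmono t" and "wf_gmono s"
  shows "wf_graph (gr (gm_mult t s))" and "vin (gm_mult t s) \<in> verts (gr (gm_mult t s))"
    and "vout (gm_mult t s) \<in> verts (gr (gm_mult t s))"
  using assms unfolding wf_gmono_def wf_graph_def gm_mult_def Let_def by auto

lemma edge_connected_gm_mult: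
  assumes "wf_gmono t" and "wf_gmono s" and "edge_connected (gr t) k v w"
  shows "edge_connected (gr (gm_mult t s)) k (2 * v) (2 * w)"
proof (rule edge_connected_hom[where \<epsilon> = "(*) 2" and h = "(*) 2"])
  show "finite (edges (gr (gm_mult t s)))"
    using wf_graph_gm_mult(1)[OF assms(1,2)] unfolding wf_graph_def by simp
qed (use assms(3) in \<open>auto simp: gm_mult_def Let_def inj_on_def\<close>)

lemma equiv_mod_psi_monomialI:
  assumes "\<And>s. wf_gmono s \<Longrightarrow> psi \<phi> (gm_mult t' s) = psi \<phi> (gm_mult t s)"
  shows "equiv_mod_psi \<phi> [(1, t')] [(1, t)]"
  unfolding equiv_mod_psi_def
proof (intro allI impI)
  fix u :: "'a lcomb" assume "wf_lcomb u"
  then show "lc_psi \<phi> (lc_mult (lc_diff [(1, t')] [(1, t)]) u) = 0"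
    using assms unfolding wf_lcomb_def
    by (induction u) (simp_all add: lc_psi_def lc_mult_def lc_diff_def algebra_simps)
qed

theorem corollary2p7:
  fixes sc :: "complex \<Rightarrow> 'a::ring_1 \<Rightarrow> 'a" and \<phi> :: "'a \<Rightarrow> complex"
    and t :: "'a gmono" and v w :: nat
  assumes "complex_algebra sc" and "tracial_state sc \<phi>"
    and "wf_gmono t"
    and "v \<in> verts (gr t)" and "w \<in> verts (gr t)" and "v \<noteq> w"
    and "3 \<le> edge_conn (gr t) v w"
  shows "equiv_mod_psi \<phi> [(1, identify t v w)] [(1, t)]"
proof (rule equiv_mod_psi_monomialI)
  \<comment> \<open>The identity of psi-values holds for every functional, so the hypotheses on sc and \<phi>
    are not needed, and neither is v \<noteq> w.\<close>
  fix s :: "'a gmono" assume s: "wf_gmono s"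
  note wf = wf_graph_gm_mult[OF assms(3) s]
  have "edge_connected (gr (gm_mult t s)) 3 (2 * v) (2 * w)"
    using edge_connected_gm_mult[OF assms(3) s edge_connected_if_le_edge_conn[OF assms(7)]] .
  moreover have "2 * v \<in> verts (gr (gm_mult t s))" and "2 * w \<in> verts (gr (gm_mult t s))"
    using assms(4,5) by (simp_all add: gm_mult_def Let_def)
  ultimately show "psi \<phi> (gm_mult (identify t v w) s) = psi \<phi> (gm_mult t s)"
    unfolding gm_mult_identify using psi_identify_edge_connected_3[OF wf] by blast
qed

end
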